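(* Let $m$ and $n$ be positive integers with $m=O(n^r)$, where $r\in\mathbb{R}$ and $r\ge 1$. For every pair of positive integers $k,\ell$ with $k\ge 3$, there exists a positive integer $N_3=N_3(k,\ell)$ such that $px_{k,\ell}(K_{m,n})=2$ for every integer $n\ge N_3$.
   Context: Here $m=m(n)$ is regarded as a function of $n$ with $m=O(n^r)$. All graphs are finite, simple and undirected; $K_{m,n}$ is the complete bipartite graph with parts of sizes $m$ and $n$. An edge-coloring of a graph may assign the same color to adjacent edges. A tree $T$ in an edge-colored graph is a proper tree if no two adjacent edges of $T$ receive the same color. For $S\subseteq V(G)$ with $|S|\ge 2$, an $S$-tree is a tree in $G$ containing all vertices of $S$. $S$-trees $T_1,\dots,T_\ell$ are internally disjoint if $E(T_i)\cap E(T_j)=\emptyset$ and $V(T_i)\cap V(T_j)=S$ for all $i\ne j$. For a connected graph $G$ of order $n$ and integers $k,\ell$ with $2\le k\le n$ and $1\le \ell\le \kappa_k(G)$ (where $\kappa_k(G)$ is the minimum, over all $k$-subsets $S$ of $V(G)$, of the maximum number of internally disjoint $S$-trees), the $(k,\ell)$-proper index $px_{k,\ell}(G)$ is the minimum number of colors in an edge-coloring of $G$ such that for every $k$-subset $S$ of $V(G)$ there exist $\ell$ internally disjoint proper $S$-trees. *)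

theory Defs
  imports Main "HOL-Library.Landau_Symbols"
begin

definition simple_graph :: "'a set \<Rightarrow> 'a set set \<Rightarrow> bool" where
  "simple_graph V E \<longleftrightarrow> finite V \<and> (\<forall>e\<in>E. e \<subseteq> V \<and> card e = 2)"

definition connected_graph :: "'a set \<Rightarrow> 'a set set \<Rightarrow> bool" where
  "connected_graph V E \<longleftrightarrow> V \<noteq> {} \<and>
     (\<forall>u\<in>V. \<forall>v\<in>V. (\<lambda>x y. {x, y} \<in> E)\<^sup>*\<^sup>* u v)"

definition has_cycle :: "'a set set \<Rightarrow> bool" where
  "has_cycle E \<longleftrightarrow> (\<exists>vs. length vs \<ge> 3 \<and> distinct vs \<and>
      (\<forall>i < length vs - 1. {vs ! i, vs ! (i + 1)} \<in> E) \<and> {last vs, hd vs} \<in> E)"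

definition is_tree :: "'a set \<Rightarrow> 'a set set \<Rightarrow> bool" where
  "is_tree V E \<longleftrightarrow> simple_graph V E \<and> connected_graph V E \<and> \<not> has_cycle E"

definition S_tree :: "'a set \<Rightarrow> 'a set set \<Rightarrow> 'a set \<Rightarrow> 'a set \<Rightarrow> 'a set set \<Rightarrow> bool" where
  "S_tree V E S VT ET \<longleftrightarrow> VT \<subseteq> V \<and> ET \<subseteq> E \<and> is_tree VT ET \<and> S \<subseteq> VT"

definition proper_tree :: "('a set \<Rightarrow> nat) \<Rightarrow> 'a set set \<Rightarrow> bool" where
  "proper_tree col ET \<longleftrightarrow>
     (\<forall>e\<in>ET. \<forall>f\<in>ET. e \<noteq> f \<and> e \<inter> f \<noteq> {} \<longrightarrow> col e \<noteq> col f)"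

definition good_colouring ::
    "nat \<Rightarrow> nat \<Rightarrow> 'a set \<Rightarrow> 'a set set \<Rightarrow> nat \<Rightarrow> ('a set \<Rightarrow> nat) \<Rightarrow> bool" where
  "good_colouring k l V E c col \<longleftrightarrow> (\<forall>e\<in>E. col e < c) \<and>
     (\<forall>S. S \<subseteq> V \<and> card S = k \<longrightarrow>
        (\<exists>T :: nat \<Rightarrow> 'a set \<times> 'a set set.
           (\<forall>i<l. S_tree V E S (fst (T i)) (snd (T i)) \<and> proper_tree col (snd (T i))) \<and>
           (\<forall>i<l. \<forall>j<l. i \<noteq> j \<longrightarrow>
               snd (T i) \<inter> snd (T j) = {} \<and> fst (T i) \<inter> fst (T j) = S)))"

definition proper_index :: "nat \<Rightarrow> nat \<Rightarrow> 'a set \<Rightarrow> 'a set set \<Rightarrow> nat" where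
  "proper_index k l V E = (LEAST c. \<exists>col. good_colouring k l V E c col)"

definition Kmn_V :: "nat \<Rightarrow> nat \<Rightarrow> (nat + nat) set" where
  "Kmn_V m n = Inl ` {0..<m} \<union> Inr ` {0..<n}"

definition Kmn_E :: "nat \<Rightarrow> nat \<Rightarrow> (nat + nat) set set" where
  "Kmn_E m n = {{Inl i, Inr j} | i j. i < m \<and> j < n}"

end

theory Submission
  imports Defs "HOL-Real_Asymp.Real_Asymp"
begin

(*
  One colour does not suffice: under a single colour a proper tree is a matching, and a
  connected matching has at most two vertices, while an S-tree has k >= 3.

  Two colours suffice once n is large. Give every left vertex i < m a code of
  d = n div 2L bits, complemented between the partners 2a and 2a+1, and cut the right side
  into 2d blocks of L vertices; an edge (i, j) with j in block u < d gets the u-th code bit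
  of i, with j in block d + u its negation. Then every right vertex has L left neighbours
  in each colour, and since distinct codes differ in some bit, any two left vertices have
  L common right neighbours in each of the two mixed colour patterns. With these two
  properties any vertex can be joined to the head of a properly coloured path through at
  most three new vertices avoiding any set of fewer than L - 1 forbidden vertices. Hence,
  for every k-set S, one builds greedily l properly coloured paths through S that pairwise
  meet exactly in S and have no edge inside S; they are internally disjoint proper S-trees.
  Finally m = O(n^r) gives m <= 2^d for large n, which is all the construction needs.
*)

fun path_edges :: "'a list \<Rightarrow> 'a set set" where
  "path_edges (x # y # p) = insert {x, y} (path_edges (y # p))"
| "path_edges _ = {}"

fun proper_path :: "('a set \<Rightarrow> nat) \<Rightarrow> 'a set set \<Rightarrow> 'a list \<Rightarrow> bool" where
  "proper_path col E (x # y # z # p) \<longleftrightarrow>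
     {x, y} \<in> E \<and> col {x, y} \<noteq> col {y, z} \<and> proper_path col E (y # z # p)"
| "proper_path col E [x, y] \<longleftrightarrow> {x, y} \<in> E"
| "proper_path col E _ \<longleftrightarrow> True"

lemma proper_path_Cons_Cons:
  "proper_path col E (x # y # p) \<longleftrightarrow>
     {x, y} \<in> E \<and> proper_path col E (y # p) \<and> (p \<noteq> [] \<longrightarrow> col {x, y} \<noteq> col {y, hd p})"
  by (cases p) auto

lemma path_edges_subset: "e \<in> path_edges p \<Longrightarrow> e \<subseteq> set p"
  by (induction p rule: path_edges.induct) auto

lemma card_path_edge: "distinct p \<Longrightarrow> e \<in> path_edges p \<Longrightarrow> card e = 2"
  by (induction p rule: path_edges.induct) auto

lemma proper_path_edges_subset: "proper_path col E p \<Longrightarrow> path_edges p \<subseteq> E"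
  by (induction col E p rule: proper_path.induct) auto

lemma path_edges_Cons_append:
  "mid \<noteq> [] \<Longrightarrow> p \<noteq> [] \<Longrightarrow> path_edges (x # mid @ p) \<subseteq> path_edges p \<union> {e. e \<inter> set mid \<noteq> {}}"
proof (induction mid arbitrary: x)
  case (Cons y mid)
  then show ?case by (cases mid; cases p) auto
qed simp

lemma path_edges_reach_hd: "v \<in> set p \<Longrightarrow> (\<lambda>x y. {x, y} \<in> path_edges p)\<^sup>*\<^sup>* (hd p) v"
proof (induction p rule: path_edges.induct)
  case (1 x y p)
  then show ?case
    by (auto intro: converse_rtranclp_into_rtranclp mono_rtranclp[rule_format, rotated])
qed auto

lemma path_edges_connected: "p \<noteq> [] \<Longrightarrow> connected_graph (set p) (path_edges p)"
proof -
  let ?adj = "\<lambda>x y. {x, y} \<in> path_edges p"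
  assume "p \<noteq> []"
  have "symp ?adj\<^sup>*\<^sup>*"
    by (rule symp_rtranclp) (auto simp: symp_def insert_commute)
  show ?thesis unfolding connected_graph_def
  proof (intro conjI ballI)
    show "set p \<noteq> {}" using \<open>p \<noteq> []\<close> by simp
    fix u v assume "u \<in> set p" "v \<in> set p"
    have "?adj\<^sup>*\<^sup>* u (hd p)"
      by (rule sympD[OF \<open>symp ?adj\<^sup>*\<^sup>*\<close> path_edges_reach_hd[OF \<open>u \<in> set p\<close>]])
    then show "?adj\<^sup>*\<^sup>* u v" using path_edges_reach_hd[OF \<open>v \<in> set p\<close>] by (rule rtranclp_trans)
  qed
qed

text \<open>A cycle has this property on its vertex set, a path on no nonempty set.\<close>
definition min_degree_two :: "'a set set \<Rightarrow> 'a set \<Rightarrow> bool" where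
  "min_degree_two E C \<longleftrightarrow> (\<forall>v\<in>C. \<exists>u w. u \<noteq> w \<and> u \<in> C \<and> w \<in> C \<and> {v, u} \<in> E \<and> {v, w} \<in> E)"

lemma cycle_edge_mod:
  assumes "length vs \<ge> 3" "\<forall>i < length vs - 1. {vs ! i, vs ! (i + 1)} \<in> E" "{last vs, hd vs} \<in> E"
    and "i < length vs"
  shows "{vs ! i, vs ! ((i + 1) mod length vs)} \<in> E"
proof (cases "i = length vs - 1")
  case True
  then have "i + 1 = length vs" using assms(1) by simp
  then have "(i + 1) mod length vs = 0" by simp
  moreover have "vs \<noteq> []" using assms(1) by auto
  ultimately show ?thesis using True assms(3) by (simp add: last_conv_nth hd_conv_nth)
next
  case False
  then show ?thesis using assms(2,4) by simp
qed

lemma has_cycle_min_degree_two: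
  assumes "has_cycle E"
  obtains C where "C \<noteq> {}" "min_degree_two E C"
proof -
  obtain vs where vs: "length vs \<ge> 3" "distinct vs" "\<forall>i < length vs - 1. {vs ! i, vs ! (i + 1)} \<in> E"
    "{last vs, hd vs} \<in> E"
    using assms unfolding has_cycle_def by blast
  define n where "n = length vs"
  note succ = cycle_edge_mod[OF vs(1,3,4), folded n_def]
  have "\<exists>u w. u \<noteq> w \<and> u \<in> set vs \<and> w \<in> set vs \<and> {v, u} \<in> E \<and> {v, w} \<in> E"
    if v: "v \<in> set vs" for v
  proof -
    obtain i where i: "i < n" "v = vs ! i" using v by (auto simp: n_def in_set_conv_nth)
    define h where "h = (i + n - 1) mod n"
    have n0: "0 < n" using vs(1) n_def by linarith
    have h: "h < n" "(h + 1) mod n = i"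
    proof -
      show "h < n" using n0 by (simp add: h_def)
      have "(h + 1) mod n = (i + n - 1 + 1) mod n" by (simp add: h_def mod_Suc_eq)
      also have "\<dots> = i" using n0 i(1) by simp
      finally show "(h + 1) mod n = i" .
    qed
    have "(i + 1) mod n \<noteq> h"
    proof
      assume "(i + 1) mod n = h"
      have "(i + 2) mod n = ((i + 1) mod n + 1) mod n" by (simp add: mod_Suc_eq)
      also have "\<dots> = i mod n" using \<open>(i + 1) mod n = h\<close> h(2) i(1) by simp
      finally have "n dvd 2" by (simp add: mod_eq_dvd_iff_nat)
      then show False using vs(1) n_def by (auto dest: dvd_imp_le)
    qed
    then have "vs ! ((i + 1) mod n) \<noteq> vs ! h"
      using vs(2) h(1) n0 by (simp add: n_def nth_eq_iff_index_eq)
    moreover have "{v, vs ! h} \<in> E" using succ[OF h(1)] h(2) i(2) by (simp add: insert_commute)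
    moreover have "vs ! ((i + 1) mod n) \<in> set vs" "vs ! h \<in> set vs"
      using h(1) n0 by (simp_all add: n_def)
    ultimately show ?thesis using succ[OF i(1)] i(2) by blast
  qed
  then show ?thesis using vs(1) by (intro that[of "set vs"]) (auto simp: min_degree_two_def)
qed

lemma min_degree_two_path_edges:
  assumes "distinct p" "min_degree_two (path_edges p) C"
  shows "C = {}"
  using assms
proof (induction p arbitrary: C rule: path_edges.induct)
  case (1 x y p)
  have "x \<notin> e" if "e \<in> path_edges (y # p)" for e
    using path_edges_subset[OF that] "1.prems"(1) by auto
  then have nbr: "{x, u} \<in> path_edges (x # y # p) \<longleftrightarrow> u = y" for u
    by (auto simp: doubleton_eq_iff)
  have "x \<notin> C"
  proof
    assume "x \<in> C"
    then obtain u w where "u \<noteq> w" "{x, u} \<in> path_edges (x # y # p)" "{x, w} \<in> path_edges (x # y # p)"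
      using "1.prems"(2) unfolding min_degree_two_def by blast
    then show False using nbr by simp
  qed
  have "min_degree_two (path_edges (y # p)) C"
    unfolding min_degree_two_def
  proof
    fix v assume "v \<in> C"
    then obtain u w where uw: "u \<noteq> w" "u \<in> C" "w \<in> C"
      "{v, u} \<in> path_edges (x # y # p)" "{v, w} \<in> path_edges (x # y # p)"
      using "1.prems"(2) unfolding min_degree_two_def by blast
    have "x \<notin> {v, u}" "x \<notin> {v, w}" using \<open>x \<notin> C\<close> \<open>v \<in> C\<close> uw(2,3) by auto
    then have "{v, u} \<in> path_edges (y # p)" "{v, w} \<in> path_edges (y # p)" using uw(4,5) by auto
    then show "\<exists>u w. u \<noteq> w \<and> u \<in> C \<and> w \<in> C \<and> {v, u} \<in> path_edges (y # p) \<and> {v, w} \<in> path_edges (y # p)"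
      using uw(1-3) by blast
  qed
  then show ?case using "1.IH" "1.prems"(1) by simp
qed (simp_all add: min_degree_two_def)

lemma not_has_cycle_path_edges: "distinct p \<Longrightarrow> \<not> has_cycle (path_edges p)"
proof
  assume "distinct p" and cycle: "has_cycle (path_edges p)"
  obtain C where "C \<noteq> {}" "min_degree_two (path_edges p) C"
    using cycle by (rule has_cycle_min_degree_two)
  then show False using min_degree_two_path_edges[OF \<open>distinct p\<close>] by blast
qed

lemma is_tree_path: "distinct p \<Longrightarrow> p \<noteq> [] \<Longrightarrow> is_tree (set p) (path_edges p)"
  unfolding is_tree_def simple_graph_def
  by (simp add: path_edges_connected not_has_cycle_path_edges card_path_edge path_edges_subset)

lemma proper_tree_insert:
  "proper_tree col (insert e ET) \<longleftrightarrow>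
     proper_tree col ET \<and> (\<forall>f\<in>ET. f \<noteq> e \<and> f \<inter> e \<noteq> {} \<longrightarrow> col f \<noteq> col e)"
  (is "?lhs \<longleftrightarrow> ?rhs")
proof
  show "?lhs \<Longrightarrow> ?rhs" unfolding proper_tree_def by blast
next
  assume ?rhs
  then have "col f \<noteq> col g" if "f \<in> insert e ET" "g \<in> insert e ET" "f \<noteq> g" "f \<inter> g \<noteq> {}" for f g
    using that by (cases "f = e"; cases "g = e") (auto simp: proper_tree_def Int_commute)
  then show ?lhs unfolding proper_tree_def by blast
qed

lemma proper_tree_path_edges:
  "distinct p \<Longrightarrow> proper_path col E p \<Longrightarrow> proper_tree col (path_edges p)"
proof (induction col E p rule: proper_path.induct)
  case (1 col E x y z p)
  have meets: "f = {y, z}" if "f \<in> path_edges (y # z # p)" "f \<inter> {x, y} \<noteq> {}" for f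
  proof -
    have "x \<notin> f" using path_edges_subset[OF that(1)] "1.prems"(1) by auto
    moreover have "y \<notin> e" if "e \<in> path_edges (z # p)" for e
      using path_edges_subset[OF that] "1.prems"(1) by auto
    ultimately show ?thesis using that by auto
  qed
  have "col f \<noteq> col {x, y}" if "f \<in> path_edges (y # z # p)" "f \<inter> {x, y} \<noteq> {}" for f
    using meets[OF that] "1.prems"(2) by simp
  moreover have "proper_tree col (path_edges (y # z # p))" using "1" by simp
  ultimately show ?case by (simp add: proper_tree_insert)
qed (simp_all add: proper_tree_def)

lemma Inl_Inr_in_Kmn_E [simp]: "{Inl i, Inr j} \<in> Kmn_E M n \<longleftrightarrow> i < M \<and> j < n"
  by (auto simp: Kmn_E_def doubleton_eq_iff)

lemma Inr_Inl_in_Kmn_E [simp]: "{Inr j, Inl i} \<in> Kmn_E M n \<longleftrightarrow> i < M \<and> j < n"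
  by (simp add: insert_commute)

lemma Inl_in_Kmn_V [simp]: "Inl i \<in> Kmn_V M n \<longleftrightarrow> i < M"
  and Inr_in_Kmn_V [simp]: "Inr j \<in> Kmn_V M n \<longleftrightarrow> j < n"
  by (auto simp: Kmn_V_def)

lemma Kmn_V_cases [consumes 1, case_names left right]:
  assumes "v \<in> Kmn_V M n"
  obtains (left) i where "i < M" "v = Inl i" | (right) j where "j < n" "v = Inr j"
  using assms by (auto simp: Kmn_V_def)

lemma finite_Kmn_V [simp]: "finite (Kmn_V M n)"
  by (simp add: Kmn_V_def)

lemma exists_fresh_image:
  assumes "finite F" "inj f" "card F < card A"
  shows "\<exists>a\<in>A. f a \<notin> F"
proof (rule ccontr)
  assume "\<not> (\<exists>a\<in>A. f a \<notin> F)"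
  then have "card (f ` A) \<le> card F" using assms(1) by (intro card_mono) auto
  moreover have "card (f ` A) = card A" using assms(2) by (simp add: card_image inj_on_subset)
  ultimately show False using assms(3) by simp
qed

locale rich_colouring =
  fixes M n L :: nat and col :: "(nat + nat) set \<Rightarrow> nat"
  assumes colour_less_2: "col e < 2"
    and many_left_nbrs: "j < n \<Longrightarrow> c < 2 \<Longrightarrow> L \<le> card {i. i < M \<and> col {Inl i, Inr j} = c}"
    and many_separating_right_nbrs: "i < M \<Longrightarrow> i' < M \<Longrightarrow> i \<noteq> i' \<Longrightarrow> c < 2 \<Longrightarrow>
           L \<le> card {j. j < n \<and> col {Inl i, Inr j} = 1 - c \<and> col {Inl i', Inr j} = c}"
begin

abbreviation ppath :: "(nat + nat) list \<Rightarrow> bool" where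
  "ppath \<equiv> proper_path col (Kmn_E M n)"

text \<open>The colour forced on an edge prepended to a path; paths with fewer than two vertices
  impose no constraint, and the value 0 is arbitrary.\<close>
fun next_colour :: "(nat + nat) list \<Rightarrow> nat" where
  "next_colour (y # z # _) = 1 - col {y, z}"
| "next_colour _ = 0"

lemma next_colour_less_2: "next_colour p < 2"
  by (cases p rule: next_colour.cases) auto

lemma ppath_Cons:
  assumes "ppath (y # p)" "{x, y} \<in> Kmn_E M n" "col {x, y} = next_colour (y # p)"
  shows "ppath (x # y # p)"
proof (cases p)
  case Nil
  then show ?thesis using assms(2) by simp
next
  case (Cons z q)
  have "col {y, z} < 2" by (rule colour_less_2)
  then have "1 - col {y, z} \<noteq> col {y, z}" by arith
  then show ?thesis using assms Cons by (simp add: proper_path_Cons_Cons)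
qed

lemma fresh_left_nbr:
  assumes "j < n" "c < 2" "finite F" "card F < L"
  obtains i where "i < M" "Inl i \<notin> F" "col {Inl i, Inr j} = c"
proof -
  have "\<exists>i\<in>{i. i < M \<and> col {Inl i, Inr j} = c}. Inl i \<notin> F"
    using many_left_nbrs[OF assms(1,2)] assms(4) by (intro exists_fresh_image[OF assms(3) inj_Inl]) simp
  then show thesis using that by blast
qed

lemma fresh_separating_right_nbr:
  assumes "i < M" "i' < M" "i \<noteq> i'" "c < 2" "finite F" "card F < L"
  obtains j where "j < n" "Inr j \<notin> F" "col {Inl i, Inr j} = 1 - c" "col {Inl i', Inr j} = c"
proof -
  have "\<exists>j\<in>{j. j < n \<and> col {Inl i, Inr j} = 1 - c \<and> col {Inl i', Inr j} = c}. Inr j \<notin> F"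
    using many_separating_right_nbrs[OF assms(1-4)] assms(6)
    by (intro exists_fresh_image[OF assms(5) inj_Inr]) simp
  then show thesis using that by blast
qed

lemma prepend_fresh_left:
  assumes "ppath (Inr j # p)" "j < n" "finite F" "card F < L"
  obtains i where "i < M" "Inl i \<notin> F" "ppath (Inl i # Inr j # p)"
proof -
  obtain i where "i < M" "Inl i \<notin> F" "col {Inl i, Inr j} = next_colour (Inr j # p)"
    using fresh_left_nbr[OF assms(2) next_colour_less_2 assms(3,4)] .
  then show thesis using ppath_Cons[OF assms(1)] assms(2) that by simp
qed

lemma prepend_detour:
  assumes "ppath (Inl i' # p)" "i < M" "i' < M" "i \<noteq> i'" "finite F" "card F < L"
  obtains j where "j < n" "Inr j \<notin> F" "ppath (Inl i # Inr j # Inl i' # p)"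
    "next_colour (Inl i # Inr j # Inl i' # p) = next_colour (Inl i' # p)"
proof -
  let ?c = "next_colour (Inl i' # p)"
  obtain j where j: "j < n" "Inr j \<notin> F" "col {Inl i, Inr j} = 1 - ?c" "col {Inl i', Inr j} = ?c"
    using fresh_separating_right_nbr[OF assms(2-4) next_colour_less_2 assms(5,6)] .
  have "ppath (Inr j # Inl i' # p)"
    using ppath_Cons[OF assms(1)] j(1,4) assms(3) by (simp add: insert_commute)
  then have "ppath (Inl i # Inr j # Inl i' # p)"
    by (rule ppath_Cons) (use j(1,3,4) assms(2) in \<open>simp_all add: insert_commute\<close>)
  moreover have "next_colour (Inl i # Inr j # Inl i' # p) = ?c"
    using j(3) next_colour_less_2[of "Inl i' # p"] by simp
  ultimately show thesis using that j(1,2) by blast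
qed

lemma connect_to_left_head:
  assumes "ppath (Inl i' # q)" "i' < M" "x \<in> Kmn_V M n" "x \<noteq> Inl i'"
    and "finite F" "Inl i' \<in> F" "card F < L"
  shows "\<exists>mid. ppath (x # mid @ Inl i' # q) \<and> set mid \<subseteq> Kmn_V M n - F \<and> distinct mid
           \<and> mid \<noteq> [] \<and> length mid \<le> 2"
  using assms(3)
proof (cases rule: Kmn_V_cases)
  case (left i)
  then have "i \<noteq> i'" using assms(4) by simp
  then obtain j where "j < n" "Inr j \<notin> F" "ppath (x # Inr j # Inl i' # q)"
    using prepend_detour[OF assms(1) left(1) assms(2) _ assms(5,7)] left(2) by blast
  then show ?thesis by (intro exI[of _ "[Inr j]"]) auto
next
  case (right j')
  let ?c = "next_colour (Inl i' # q)"
  obtain i where i: "i < M" "Inl i \<notin> F" "col {Inl i, Inr j'} = ?c"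
    using fresh_left_nbr[OF right(1) next_colour_less_2 assms(5,7)] .
  have "i \<noteq> i'" using i(2) assms(6) by auto
  then obtain j where j: "j < n" "Inr j \<notin> F" "ppath (Inl i # Inr j # Inl i' # q)"
    "next_colour (Inl i # Inr j # Inl i' # q) = ?c"
    using prepend_detour[OF assms(1) i(1) assms(2) _ assms(5,7)] by blast
  have "ppath (x # Inl i # Inr j # Inl i' # q)"
    by (rule ppath_Cons[OF j(3)]) (use right i(1,3) j(4) in \<open>simp_all add: insert_commute\<close>)
  then show ?thesis using i(1,2) j(1,2) by (intro exI[of _ "[Inl i, Inr j]"]) auto
qed

lemma connect_to_path:
  assumes "ppath q" "q \<noteq> []" "set q \<subseteq> Kmn_V M n" "x \<in> Kmn_V M n" "x \<notin> set q"
    and "finite F" "set q \<subseteq> F" "x \<in> F" "card F + 2 \<le> L"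
  shows "\<exists>mid. ppath (x # mid @ q) \<and> set mid \<subseteq> Kmn_V M n - F \<and> distinct mid
           \<and> mid \<noteq> [] \<and> length mid \<le> 3"
proof -
  obtain y q' where q: "q = y # q'" using assms(2) by (cases q) auto
  have "y \<in> Kmn_V M n" using assms(3) q by auto
  then show ?thesis
  proof (cases rule: Kmn_V_cases)
    case (left i')
    have "ppath (Inl i' # q')" "x \<noteq> Inl i'" "Inl i' \<in> F" "card F < L"
      using assms(1,5,7,9) q left(2) by auto
    then obtain mid where "ppath (x # mid @ q)" "set mid \<subseteq> Kmn_V M n - F" "distinct mid"
      "mid \<noteq> []" "length mid \<le> 2"
      using connect_to_left_head[OF _ left(1) assms(4) _ assms(6)] q left(2) by blast
    then show ?thesis by (intro exI[of _ mid]) simp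
  next
    case (right j)
    obtain i where i: "i < M" "Inl i \<notin> F" "ppath (Inl i # q)"
      using prepend_fresh_left[of j q' F] assms(1,6,9) q right by auto
    have "x \<noteq> Inl i" using assms(8) i(2) by auto
    moreover have "finite (insert (Inl i) F)" using assms(6) by simp
    moreover have "card (insert (Inl i) F) < L" using assms(6,9) by (simp add: card_insert_if)
    ultimately obtain mid where "ppath (x # mid @ Inl i # q)"
      "set mid \<subseteq> Kmn_V M n - insert (Inl i) F" "distinct mid" "mid \<noteq> []" "length mid \<le> 2"
      using connect_to_left_head[OF i(3) i(1) assms(4)] by blast
    then show ?thesis using i(1,2) by (intro exI[of _ "mid @ [Inl i]"]) auto
  qed
qed

text \<open>The last clause makes paths that meet only in S edge-disjoint.\<close>
definition proper_path_meeting :: "(nat + nat) set \<Rightarrow> (nat + nat) set \<Rightarrow> (nat + nat) list \<Rightarrow> bool" where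
  "proper_path_meeting S T q \<longleftrightarrow> ppath q \<and> distinct q \<and> q \<noteq> [] \<and> set q \<subseteq> Kmn_V M n
     \<and> set q \<inter> S = T \<and> card (set q) \<le> 4 * card T \<and> (\<forall>e\<in>path_edges q. \<not> e \<subseteq> S)"

lemma proper_path_meeting_subset: "proper_path_meeting S T q \<Longrightarrow> T \<subseteq> set q"
  by (auto simp: proper_path_meeting_def)

lemma proper_path_meeting_insert:
  assumes q: "proper_path_meeting S T q" "set q \<inter> U = {}"
    and "x \<in> S" "x \<notin> T" "S \<subseteq> Kmn_V M n" "finite U" "U \<inter> S = {}" "card U + 5 * card S + 2 \<le> L"
  shows "\<exists>q'. proper_path_meeting S (insert x T) q' \<and> set q' \<inter> U = {}"
proof -
  have "finite S" using finite_subset[OF assms(5)] by simp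
  have q': "ppath q" "distinct q" "q \<noteq> []" "set q \<subseteq> Kmn_V M n" "set q \<inter> S = T"
    "card (set q) \<le> 4 * card T" "\<forall>e\<in>path_edges q. \<not> e \<subseteq> S"
    using q(1) by (simp_all add: proper_path_meeting_def)
  define F where "F = U \<union> S \<union> set q"
  have "card F \<le> card (U \<union> S) + card (set q)" unfolding F_def by (rule card_Un_le)
  also have "\<dots> \<le> card U + card S + 4 * card T" using card_Un_le[of U S] q'(6) by simp
  also have "\<dots> \<le> card U + 5 * card S" using card_mono[OF \<open>finite S\<close>, of T] q'(5) by auto
  finally have "card F + 2 \<le> L" using assms(8) by linarith
  moreover have "x \<in> Kmn_V M n" "x \<notin> set q" "x \<in> F" "set q \<subseteq> F" "finite F"
    using assms(3-6) \<open>finite S\<close> q'(5) by (auto simp: F_def)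
  ultimately obtain mid where mid: "ppath (x # mid @ q)" "set mid \<subseteq> Kmn_V M n - F"
    "distinct mid" "mid \<noteq> []" "length mid \<le> 3"
    using connect_to_path[OF q'(1,3,4)] by blast
  have "set mid \<inter> F = {}" using mid(2) by blast
  have "card (set (x # mid @ q)) \<le> card (set (x # mid)) + card (set q)"
    using card_Un_le[of "set (x # mid)" "set q"] by simp
  also have "\<dots> \<le> length (x # mid) + 4 * card T"
    using card_length q'(6) by (rule add_mono)
  also have "\<dots> \<le> 4 * card (insert x T)"
    using mid(5) assms(4) finite_subset[OF _ \<open>finite S\<close>, of T] q'(5) by auto
  finally have "card (set (x # mid @ q)) \<le> 4 * card (insert x T)" .
  moreover have "\<not> e \<subseteq> S" if "e \<in> path_edges (x # mid @ q)" for e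
  proof -
    have "e \<in> path_edges q \<or> e \<inter> set mid \<noteq> {}"
      using that path_edges_Cons_append[OF mid(4) q'(3)] by blast
    moreover have "set mid \<inter> S = {}" using \<open>set mid \<inter> F = {}\<close> by (auto simp: F_def)
    ultimately show "\<not> e \<subseteq> S" using q'(7) by blast
  qed
  moreover have "distinct (x # mid @ q)"
    using \<open>set mid \<inter> F = {}\<close> mid(3) q'(2) \<open>x \<notin> set q\<close> \<open>x \<in> F\<close> \<open>set q \<subseteq> F\<close> by auto
  moreover have "set (x # mid @ q) \<inter> S = insert x T" "set (x # mid @ q) \<inter> U = {}"
    using \<open>set mid \<inter> F = {}\<close> q'(5) q(2) assms(3,7) unfolding F_def by auto
  moreover have "set (x # mid @ q) \<subseteq> Kmn_V M n" using mid(2) q'(4) \<open>x \<in> Kmn_V M n\<close> by auto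
  ultimately show ?thesis using mid(1)
    by (intro exI[of _ "x # mid @ q"]) (simp add: proper_path_meeting_def)
qed

lemma proper_path_meeting_all:
  assumes "S \<subseteq> Kmn_V M n" "S \<noteq> {}" "finite U" "U \<inter> S = {}" "card U + 5 * card S + 2 \<le> L"
  shows "\<exists>q. proper_path_meeting S S q \<and> set q \<inter> U = {}"
proof -
  have "finite S" using finite_subset[OF assms(1)] by simp
  have "\<exists>q. proper_path_meeting S T q \<and> set q \<inter> U = {}" if "T \<subseteq> S" "T \<noteq> {}" for T
    using finite_subset[OF that(1) \<open>finite S\<close>] that(2,1)
  proof (induction T rule: finite_ne_induct)
    case (singleton x)
    then show ?case
      using assms(1,4) by (intro exI[of _ "[x]"]) (auto simp: proper_path_meeting_def)
  next
    case (insert x T)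
    then show ?case using proper_path_meeting_insert assms(1,3-5) by blast
  qed
  then show ?thesis using assms(2) by blast
qed

lemma internally_disjoint_S_paths:
  assumes "S \<subseteq> Kmn_V M n" "S \<noteq> {}" "4 * card S * l + 5 * card S + 2 \<le> L"
  shows "\<exists>P. (\<forall>i<l. proper_path_meeting S S (P i)) \<and> (\<forall>i<l. \<forall>j<l. i \<noteq> j \<longrightarrow> set (P i) \<inter> set (P j) = S)"
  using assms(3)
proof (induction l)
  case 0
  show ?case by simp
next
  case (Suc l)
  then obtain P where P: "\<forall>i<l. proper_path_meeting S S (P i)"
    "\<forall>i<l. \<forall>j<l. i \<noteq> j \<longrightarrow> set (P i) \<inter> set (P j) = S"
    by fastforce
  define U where "U = (\<Union>i<l. set (P i)) - S"
  have "card U \<le> card (\<Union>i<l. set (P i))" unfolding U_def by (intro card_mono) auto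
  also have "\<dots> \<le> (\<Sum>i<l. card (set (P i)))" by (rule card_UN_le) simp
  also have "\<dots> \<le> (\<Sum>i<l. 4 * card S)" using P(1) by (intro sum_mono) (simp add: proper_path_meeting_def)
  finally have "card U + 5 * card S + 2 \<le> L" using Suc.prems by (simp add: algebra_simps)
  moreover have "finite U" "U \<inter> S = {}" by (auto simp: U_def)
  ultimately obtain q where q: "proper_path_meeting S S q" "set q \<inter> U = {}"
    using proper_path_meeting_all[OF assms(1,2)] by blast
  have new: "set q \<inter> set (P i) = S" if "i < l" for i
  proof
    show "S \<subseteq> set q \<inter> set (P i)" using q(1) P(1) that proper_path_meeting_subset by blast
    show "set q \<inter> set (P i) \<subseteq> S" using q(2) that by (auto simp: U_def)
  qed
  show ?case
  proof (intro exI[of _ "P(l := q)"] conjI allI impI)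
    fix i assume "i < Suc l"
    then show "proper_path_meeting S S ((P(l := q)) i)" using P(1) q(1) by (cases "i = l") simp_all
  next
    fix i j assume "i < Suc l" "j < Suc l" "i \<noteq> j"
    then show "set ((P(l := q)) i) \<inter> set ((P(l := q)) j) = S"
      using P(2) new by (cases "i = l"; cases "j = l") (simp_all add: Int_commute)
  qed
qed

lemma is_good_colouring:
  assumes "1 \<le> k" "4 * k * l + 5 * k + 2 \<le> L"
  shows "good_colouring k l (Kmn_V M n) (Kmn_E M n) 2 col"
  unfolding good_colouring_def
proof (intro conjI allI impI ballI)
  show "col e < 2" for e by (rule colour_less_2)
  fix S assume S: "S \<subseteq> Kmn_V M n \<and> card S = k"
  then have "S \<noteq> {}" using assms(1) by auto
  then obtain P where P: "\<forall>i<l. proper_path_meeting S S (P i)"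
    "\<forall>i<l. \<forall>j<l. i \<noteq> j \<longrightarrow> set (P i) \<inter> set (P j) = S"
    using internally_disjoint_S_paths[of S l] S assms(2) by blast
  have edge_disjoint: "path_edges (P i) \<inter> path_edges (P j) = {}" if "i < l" "j < l" "i \<noteq> j" for i j
  proof -
    have "e \<subseteq> S" if "e \<in> path_edges (P i)" "e \<in> path_edges (P j)" for e
      using path_edges_subset[OF that(1)] path_edges_subset[OF that(2)] P(2) \<open>i < l\<close> \<open>j < l\<close> \<open>i \<noteq> j\<close>
      by blast
    then show ?thesis using P(1) \<open>i < l\<close> by (auto simp: proper_path_meeting_def)
  qed
  have tree: "S_tree (Kmn_V M n) (Kmn_E M n) S (set (P i)) (path_edges (P i))
      \<and> proper_tree col (path_edges (P i))" if "i < l" for i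
  proof -
    have "proper_path_meeting S S (P i)" using P(1) that by simp
    then have Pi: "ppath (P i)" "distinct (P i)" "P i \<noteq> []" "set (P i) \<subseteq> Kmn_V M n" "S \<subseteq> set (P i)"
      using proper_path_meeting_subset[of S S "P i"] by (simp_all add: proper_path_meeting_def)
    then show ?thesis
      using proper_path_edges_subset[OF Pi(1)] proper_tree_path_edges[OF Pi(2,1)] is_tree_path[OF Pi(2,3)]
      by (simp add: S_tree_def)
  qed
  show "\<exists>T. (\<forall>i<l. S_tree (Kmn_V M n) (Kmn_E M n) S (fst (T i)) (snd (T i)) \<and> proper_tree col (snd (T i)))
      \<and> (\<forall>i<l. \<forall>j<l. i \<noteq> j \<longrightarrow> snd (T i) \<inter> snd (T j) = {} \<and> fst (T i) \<inter> fst (T j) = S)"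
    using tree P(2) edge_disjoint by (intro exI[of _ "\<lambda>i. (set (P i), path_edges (P i))"]) simp
qed

end

lemma bit_less_power_nat: "(x :: nat) < 2 ^ d \<Longrightarrow> bit x u \<Longrightarrow> u < d"
  by (metis bit_take_bit_iff take_bit_nat_eq_self_iff)

definition code_bit :: "nat \<Rightarrow> nat \<Rightarrow> bool" where
  "code_bit i u \<longleftrightarrow> bit (i div 2) u \<noteq> odd i"

definition block_colour :: "nat \<Rightarrow> nat \<Rightarrow> nat \<Rightarrow> nat \<Rightarrow> bool" where
  "block_colour L d i j =
     (if j div L < d then code_bit i (j div L)
      else if j div L < 2 * d then \<not> code_bit i (j div L - d)
      else odd i)"

text \<open>Only its values on the edges {Inl i, Inr j} matter.\<close>
definition binary_colouring :: "nat \<Rightarrow> nat \<Rightarrow> (nat + nat) set \<Rightarrow> nat" where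
  "binary_colouring L d e = of_bool (block_colour L d (SOME i. Inl i \<in> e) (SOME j. Inr j \<in> e))"

lemma binary_colouring_edge [simp]:
  "binary_colouring L d {Inl i, Inr j} = of_bool (block_colour L d i j)"
proof -
  have "(SOME i'. Inl i' \<in> {Inl i, Inr j}) = i" "(SOME j'. Inr j' \<in> {Inl i, Inr j}) = j"
    by (rule some_equality; auto)+
  then show ?thesis by (simp add: binary_colouring_def)
qed

lemma block_colour_partner: "block_colour L d (2 * a + 1) j \<longleftrightarrow> \<not> block_colour L d (2 * a) j"
  by (simp add: block_colour_def code_bit_def)

lemma code_bit_separates:
  assumes "i < 2 ^ d" "i' < 2 ^ d" "i \<noteq> i'"
  shows "\<exists>u<d. code_bit i u \<noteq> code_bit i' u"
proof (cases "odd i \<longleftrightarrow> odd i'")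
  case True
  then have "i div 2 \<noteq> i' div 2" using assms(3)
    by (metis odd_two_times_div_two_succ even_two_times_div_two)
  then obtain u where u: "bit (i div 2) u \<noteq> bit (i' div 2) u" by (auto simp: bit_eq_iff)
  moreover have "i div 2 < 2 ^ d" "i' div 2 < 2 ^ d" using assms(1,2) by auto
  ultimately have "u < d" using bit_less_power_nat by blast
  then show ?thesis using u True by (auto simp: code_bit_def)
next
  case False
  obtain d' where d: "d = Suc d'" using assms by (cases d) auto
  then have "i div 2 < 2 ^ d'" "i' div 2 < 2 ^ d'" using assms(1,2) by auto
  then have "\<not> bit (i div 2) d'" "\<not> bit (i' div 2) d'" using bit_less_power_nat by blast+
  then show ?thesis using False d by (intro exI[of _ d']) (auto simp: code_bit_def)
qed

lemma binary_colouring_many_left_nbrs: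
  assumes "2 * L \<le> M" "c < 2"
  shows "L \<le> card {i. i < M \<and> binary_colouring L d {Inl i, Inr j} = c}"
proof -
  let ?A = "{i. i < M \<and> binary_colouring L d {Inl i, Inr j} = c}"
  define h where "h a = (if binary_colouring L d {Inl (2 * a), Inr j} = c then 2 * a else 2 * a + 1)" for a
  have "h a div 2 = a" for a by (simp add: h_def)
  then have "inj_on h {..<L}" by (metis inj_onI)
  moreover have "h ` {..<L} \<subseteq> ?A"
  proof
    fix x assume "x \<in> h ` {..<L}"
    then obtain a where a: "a < L" "x = h a" by auto
    have "x < M" using a assms(1) by (simp add: h_def)
    moreover have "binary_colouring L d {Inl x, Inr j} = c"
    proof (cases "binary_colouring L d {Inl (2 * a), Inr j} = c")
      case False
      then have "binary_colouring L d {Inl (2 * a + 1), Inr j} = c"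
        using assms(2) block_colour_partner[of L d a j] by (cases "block_colour L d (2 * a) j") simp_all
      then show ?thesis using False a(2) by (simp add: h_def)
    qed (use a(2) in \<open>simp add: h_def\<close>)
    ultimately show "x \<in> ?A" by simp
  qed
  then have "card (h ` {..<L}) \<le> card ?A" by (intro card_mono) simp_all
  ultimately show ?thesis by (simp add: card_image)
qed

lemma binary_colouring_many_separating_right_nbrs:
  assumes "M \<le> 2 ^ d" "2 * d * L \<le> n" "i < M" "i' < M" "i \<noteq> i'" "c < 2"
  shows "L \<le> card {j. j < n \<and> binary_colouring L d {Inl i, Inr j} = 1 - c
                      \<and> binary_colouring L d {Inl i', Inr j} = c}"
    (is "L \<le> card ?B")
proof (cases "L = 0")
  case False
  obtain u where u: "u < d" "code_bit i u \<noteq> code_bit i' u"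
    using code_bit_separates[of i d i'] assms(1,3-5) by auto
  define t where "t = (if code_bit i u \<longleftrightarrow> c = 0 then u else u + d)"
  have "{t * L..<t * L + L} \<subseteq> ?B"
  proof
    fix j assume j: "j \<in> {t * L..<t * L + L}"
    then have "j div L = t" using False by (intro div_nat_eqI) (auto simp: algebra_simps)
    then have "block_colour L d i j \<longleftrightarrow> c = 0" "block_colour L d i' j \<longleftrightarrow> c \<noteq> 0"
      using u by (auto simp: block_colour_def t_def)
    moreover have "j < (t + 1) * L" using j by (simp add: algebra_simps)
    moreover have "(t + 1) * L \<le> 2 * d * L" using u(1) by (intro mult_le_mono1) (simp add: t_def)
    ultimately show "j \<in> ?B" using assms(2,6) by auto
  qed
  then have "card {t * L..<t * L + L} \<le> card ?B" by (intro card_mono) auto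
  then show ?thesis by simp
qed simp

lemma rich_colouring_binary:
  assumes "2 * L \<le> M" "M \<le> 2 ^ d" "2 * d * L \<le> n"
  shows "rich_colouring M n L (binary_colouring L d)"
  using assms binary_colouring_many_left_nbrs binary_colouring_many_separating_right_nbrs
  by unfold_locales (auto simp: binary_colouring_def)

lemma matching_reachable_adjacent:
  assumes "pairwise disjnt ET" "(\<lambda>x y. {x, y} \<in> ET)\<^sup>*\<^sup>* a b"
  shows "a = b \<or> {a, b} \<in> ET"
  using assms(2)
proof (induction rule: rtranclp_induct)
  case (step b c)
  from step.IH show ?case
  proof
    assume ab: "{a, b} \<in> ET"
    have "{a, b} = {b, c}"
    proof (rule ccontr)
      assume "{a, b} \<noteq> {b, c}"
      with pairwiseD[OF assms(1) ab step.hyps(2)] show False by simp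
    qed
    then show ?thesis by (auto simp: doubleton_eq_iff)
  qed (use step.hyps(2) in simp)
qed simp

lemma card_monochromatic_proper_tree:
  assumes "is_tree VT ET" "proper_tree col ET" "\<forall>e\<in>ET. col e = c"
  shows "card VT \<le> 2"
proof (rule ccontr)
  assume "\<not> card VT \<le> 2"
  then have "3 \<le> card VT" by simp
  then obtain T where "T \<subseteq> VT" "card T = 3" "finite T" by (rule obtain_subset_with_card_n)
  then obtain x y z where "T = {x, y, z}" "x \<noteq> y" "y \<noteq> z" "x \<noteq> z" by (metis card_3_iff)
  then have xyz: "x \<in> VT" "y \<in> VT" "z \<in> VT" "x \<noteq> y" "y \<noteq> z" "x \<noteq> z"
    using \<open>T \<subseteq> VT\<close> by auto
  have matching: "pairwise disjnt ET"
  proof (rule pairwiseI)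
    fix e f assume "e \<in> ET" "f \<in> ET" "e \<noteq> f"
    then have "e \<inter> f \<noteq> {} \<longrightarrow> col e \<noteq> col f" using assms(2) unfolding proper_tree_def by blast
    then show "disjnt e f" using assms(3) \<open>e \<in> ET\<close> \<open>f \<in> ET\<close> by (simp add: disjnt_def)
  qed
  have reach: "(\<lambda>x y. {x, y} \<in> ET)\<^sup>*\<^sup>* u v" if "u \<in> VT" "v \<in> VT" for u v
    using assms(1) that by (simp add: is_tree_def connected_graph_def)
  have "{x, y} \<in> ET" using matching_reachable_adjacent[OF matching reach[OF xyz(1,2)]] xyz(4) by simp
  moreover have "{x, z} \<in> ET" using matching_reachable_adjacent[OF matching reach[OF xyz(1,3)]] xyz(6) by simp
  moreover have "{x, y} \<noteq> {x, z}" using xyz by (auto simp: doubleton_eq_iff)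
  ultimately have "disjnt {x, y} {x, z}" by (rule pairwiseD[OF matching])
  then show False by simp
qed

lemma not_good_colouring_less_2:
  assumes "3 \<le> k" "1 \<le> l" "k \<le> M" "0 < n" "c < 2"
  shows "\<not> good_colouring k l (Kmn_V M n) (Kmn_E M n) c col"
proof
  assume good: "good_colouring k l (Kmn_V M n) (Kmn_E M n) c col"
  have "{Inl 0, Inr 0} \<in> Kmn_E M n" using assms(1,3,4) by simp
  then have "col {Inl 0, Inr 0} < c" using good by (simp add: good_colouring_def)
  then have "c = 1" using assms(5) by simp
  then have monochromatic: "\<forall>e\<in>Kmn_E M n. col e = 0" using good by (simp add: good_colouring_def)
  obtain S :: "(nat + nat) set" where S: "S \<subseteq> Inl ` {..<M}" "card S = k"
    using obtain_subset_with_card_n[of k "Inl ` {..<M}"] assms(3) by (auto simp: card_image)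
  then have "S \<subseteq> Kmn_V M n" by (auto simp: Kmn_V_def)
  then obtain T :: "nat \<Rightarrow> (nat + nat) set \<times> (nat + nat) set set"
    where "\<forall>i<l. S_tree (Kmn_V M n) (Kmn_E M n) S (fst (T i)) (snd (T i)) \<and> proper_tree col (snd (T i))"
    using good S(2) unfolding good_colouring_def by blast
  then have "S_tree (Kmn_V M n) (Kmn_E M n) S (fst (T 0)) (snd (T 0)) \<and> proper_tree col (snd (T 0))"
    using assms(2) by simp
  then obtain VT ET where tree: "S_tree (Kmn_V M n) (Kmn_E M n) S VT ET" "proper_tree col ET"
    by blast
  then have "is_tree VT ET" "S \<subseteq> VT" "ET \<subseteq> Kmn_E M n" by (simp_all add: S_tree_def)
  then have "card VT \<le> 2"
    using card_monochromatic_proper_tree[OF _ tree(2)] monochromatic by blast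
  moreover have "finite VT" using \<open>is_tree VT ET\<close> by (simp add: is_tree_def simple_graph_def)
  then have "k \<le> card VT" using card_mono[OF _ \<open>S \<subseteq> VT\<close>] S(2) by simp
  ultimately show False using assms(1) by simp
qed

lemma bigO_powr_eventually_le_pow2_div:
  fixes f :: "nat \<Rightarrow> real"
  assumes "f \<in> O(\<lambda>n. real n powr r)" "0 < K"
  shows "eventually (\<lambda>n. f n \<le> 2 ^ (n div K)) at_top"
proof -
  obtain C where "eventually (\<lambda>n. norm (f n) \<le> C * norm (real n powr r)) at_top"
    using assms(1) by (elim landau_o.bigE)
  moreover have "eventually (\<lambda>n::nat. C * real n powr r \<le> 2 powr (real n / real K - 1)) at_top"
    using assms(2) by real_asymp
  ultimately show ?thesis
  proof eventually_elim
    case (elim n)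
    have "real n < real K + real K * real (n div K)"
      using dividend_less_times_div[OF assms(2), of n] by (metis of_nat_add of_nat_less_iff of_nat_mult)
    then have "real n / real K - 1 \<le> real (n div K)"
      using assms(2) by (simp add: field_simps)
    then have "2 powr (real n / real K - 1) \<le> 2 ^ (n div K)"
      by (simp add: powr_realpow[symmetric])
    then show ?case using elim by simp
  qed
qed

lemma proper_index_Kmn_eq_2:
  fixes k l M n :: nat
  defines "L \<equiv> 4 * k * l + 5 * k + 2"
  assumes "3 \<le> k" "1 \<le> l" "2 * L \<le> n" "n \<le> M" "M \<le> 2 ^ (n div (2 * L))"
  shows "proper_index k l (Kmn_V M n) (Kmn_E M n) = 2"
proof -
  define d where "d = n div (2 * L)"
  have "2 * d * L \<le> n" using div_times_less_eq_dividend[of n "2 * L"] by (simp add: d_def ac_simps)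
  then have "rich_colouring M n L (binary_colouring L d)"
    using assms(4-6) by (intro rich_colouring_binary) (simp_all add: d_def)
  then have good: "good_colouring k l (Kmn_V M n) (Kmn_E M n) 2 (binary_colouring L d)"
    by (rule rich_colouring.is_good_colouring) (use assms(2) in \<open>simp_all add: L_def\<close>)
  have "k \<le> M" "0 < n" using assms(2,4,5) by (simp_all add: L_def)
  then have bad: "\<not> good_colouring k l (Kmn_V M n) (Kmn_E M n) c col" if "c < 2" for c col
    using not_good_colouring_less_2 assms(2,3) that by blast
  show ?thesis unfolding proper_index_def
  proof (rule Least_equality)
    show "\<exists>col. good_colouring k l (Kmn_V M n) (Kmn_E M n) 2 col" using good by blast
    show "2 \<le> c" if "\<exists>col. good_colouring k l (Kmn_V M n) (Kmn_E M n) c col" for c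
      using that bad by (meson not_le)
  qed
qed

theorem theorem3p2:
  fixes m :: "nat \<Rightarrow> nat" and r :: real
  assumes "r \<ge> 1"
    and "\<And>n. m n > 0"
    and "\<And>n. n \<le> m n"
    and "(\<lambda>n. real (m n)) \<in> O(\<lambda>n. real n powr r)"
  shows "\<forall>k l. k \<ge> 3 \<and> l \<ge> 1 \<longrightarrow>
           (\<exists>N3 > 0. \<forall>n \<ge> N3. proper_index k l (Kmn_V (m n) n) (Kmn_E (m n) n) = 2)"
proof (intro allI impI)
  fix k l :: nat
  assume kl: "k \<ge> 3 \<and> l \<ge> 1"
  define L where "L = 4 * k * l + 5 * k + 2"
  have "eventually (\<lambda>n. real (m n) \<le> 2 ^ (n div (2 * L))) at_top"
    using bigO_powr_eventually_le_pow2_div[OF assms(4)] by (simp add: L_def)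
  then obtain N where N: "\<And>n. N \<le> n \<Longrightarrow> m n \<le> 2 ^ (n div (2 * L))"
    unfolding eventually_at_top_linorder by (metis of_nat_le_iff of_nat_numeral of_nat_power)
  show "\<exists>N3 > 0. \<forall>n \<ge> N3. proper_index k l (Kmn_V (m n) n) (Kmn_E (m n) n) = 2"
  proof (intro exI[of _ "N + 2 * L"] conjI allI impI)
    fix n assume "N + 2 * L \<le> n"
    then show "proper_index k l (Kmn_V (m n) n) (Kmn_E (m n) n) = 2"
      using proper_index_Kmn_eq_2[of k l n "m n"] N[of n] assms(3)[of n] kl by (simp add: L_def)
  qed (simp add: L_def)
qed

end
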